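(* Let $A\subset\mathbb{R}$ and $a\in\mathbb{R}$. Then the following are equivalent: (i) every function $f:A\to\mathbb{R}$ which has a $T_5$ limit at $a$ has exactly one $T_5$ limit at $a$ (i.e. if $T_5\lim_{x\to a}f(x)=L_1$ and $T_5\lim_{x\to a}f(x)=L_2$ then $L_1=L_2$); (ii) for every real $\delta>0$ the set $\left((a-\delta,a+\delta)\setminus\{a\}\right)\cap A$ is uncountable.
   Context: For $A\subset\mathbb{R}$, $f:A\to\mathbb{R}$ and $a,L\in\mathbb{R}$, one writes $T_5\lim_{x\to a}f(x)=L$ (and says $L$ is a $T_5$ limit of $f$ at $a$) if for every real $\varepsilon>0$ there exists a real $\delta_\varepsilon>0$ such that the set $\left\{x\in\left((a-\delta_{\varepsilon},a+\delta_{\varepsilon})\setminus\{a\}\right)\cap A:\ |f(x)-L|\geq\varepsilon\right\}$ is countable (finite or countably infinite). *)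

theory Defs
  imports "HOL-Analysis.Analysis"
begin

text \<open>T5 limit: L is a T5 limit of f (restricted to A) at a.
  A function f : A -> R is modelled as a total function real => real whose
  values outside A are irrelevant.\<close>
definition T5_limit :: "real set \<Rightarrow> (real \<Rightarrow> real) \<Rightarrow> real \<Rightarrow> real \<Rightarrow> bool" where
  "T5_limit A f a L \<longleftrightarrow>
     (\<forall>\<epsilon>>0. \<exists>\<delta>>0. countable {x \<in> ({a - \<delta> <..< a + \<delta>} - {a}) \<inter> A. \<bar>f x - L\<bar> \<ge> \<epsilon>})"

end

theory Submission
  imports Defs
begin

text \<open>Two distinct \<open>T\<^sub>5\<close> limits \<open>L\<^sub>1 \<noteq> L\<^sub>2\<close> force every point near \<open>a\<close> to be at distance
  at least \<open>\<bar>L\<^sub>1 - L\<^sub>2\<bar>/2\<close> from one of them, so a small punctured neighbourhood of \<open>a\<close> in \<open>A\<close>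
  is the union of two countable exceptional sets. Conversely, if some punctured neighbourhood
  is countable, every exceptional set is countable and every real number is a \<open>T\<^sub>5\<close> limit
  of every function.\<close>

lemma T5_limit_if_countable_punctured_nbhd:
  assumes "\<delta> > 0" and "countable (({a - \<delta> <..< a + \<delta>} - {a}) \<inter> A)"
  shows "T5_limit A f a L"
  unfolding T5_limit_def
  using assms by (blast intro: countable_subset)

lemma countable_punctured_nbhd_if_distinct_T5_limits:
  assumes lim1: "T5_limit A f a L1" and lim2: "T5_limit A f a L2" and "L1 \<noteq> L2"
  obtains \<delta> where "\<delta> > 0" and "countable (({a - \<delta> <..< a + \<delta>} - {a}) \<inter> A)"
proof -
  define \<epsilon> where "\<epsilon> = \<bar>L1 - L2\<bar> / 2"
  have "\<epsilon> > 0"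
    using \<open>L1 \<noteq> L2\<close> by (simp add: \<epsilon>_def)
  obtain \<delta>1 where "\<delta>1 > 0" and
    count1: "countable {x \<in> ({a - \<delta>1 <..< a + \<delta>1} - {a}) \<inter> A. \<bar>f x - L1\<bar> \<ge> \<epsilon>}"
    using lim1 \<open>\<epsilon> > 0\<close> unfolding T5_limit_def by blast
  obtain \<delta>2 where "\<delta>2 > 0" and
    count2: "countable {x \<in> ({a - \<delta>2 <..< a + \<delta>2} - {a}) \<inter> A. \<bar>f x - L2\<bar> \<ge> \<epsilon>}"
    using lim2 \<open>\<epsilon> > 0\<close> unfolding T5_limit_def by blast
  define \<delta> where "\<delta> = min \<delta>1 \<delta>2"
  have far: "\<bar>f x - L1\<bar> \<ge> \<epsilon> \<or> \<bar>f x - L2\<bar> \<ge> \<epsilon>" for x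
    unfolding \<epsilon>_def by (auto simp: abs_if)
  have "({a - \<delta> <..< a + \<delta>} - {a}) \<inter> A \<subseteq>
      {x \<in> ({a - \<delta>1 <..< a + \<delta>1} - {a}) \<inter> A. \<bar>f x - L1\<bar> \<ge> \<epsilon>} \<union>
      {x \<in> ({a - \<delta>2 <..< a + \<delta>2} - {a}) \<inter> A. \<bar>f x - L2\<bar> \<ge> \<epsilon>}"
  proof
    fix x
    assume "x \<in> ({a - \<delta> <..< a + \<delta>} - {a}) \<inter> A"
    then have "x \<in> ({a - \<delta>1 <..< a + \<delta>1} - {a}) \<inter> A" "x \<in> ({a - \<delta>2 <..< a + \<delta>2} - {a}) \<inter> A"
      by (auto simp: \<delta>_def)
    then show "x \<in> {x \<in> ({a - \<delta>1 <..< a + \<delta>1} - {a}) \<inter> A. \<bar>f x - L1\<bar> \<ge> \<epsilon>} \<union>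
        {x \<in> ({a - \<delta>2 <..< a + \<delta>2} - {a}) \<inter> A. \<bar>f x - L2\<bar> \<ge> \<epsilon>}"
      using far[of x] by blast
  qed
  then have "countable (({a - \<delta> <..< a + \<delta>} - {a}) \<inter> A)"
    using countable_Un[OF count1 count2] by (rule countable_subset)
  moreover have "\<delta> > 0"
    using \<open>\<delta>1 > 0\<close> \<open>\<delta>2 > 0\<close> by (simp add: \<delta>_def)
  ultimately show thesis
    using that by blast
qed

theorem theorem2:
  fixes A :: "real set" and a :: real
  shows "(\<forall>f :: real \<Rightarrow> real. \<forall>L1 L2. T5_limit A f a L1 \<and> T5_limit A f a L2 \<longrightarrow> L1 = L2)
     \<longleftrightarrow> (\<forall>\<delta>>0. uncountable (({a - \<delta> <..< a + \<delta>} - {a}) \<inter> A))"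
proof
  assume "\<forall>f :: real \<Rightarrow> real. \<forall>L1 L2. T5_limit A f a L1 \<and> T5_limit A f a L2 \<longrightarrow> L1 = L2"
  then have "\<not> (T5_limit A (\<lambda>_. 0) a 0 \<and> T5_limit A (\<lambda>_. 0) a 1)"
    by fastforce
  then show "\<forall>\<delta>>0. uncountable (({a - \<delta> <..< a + \<delta>} - {a}) \<inter> A)"
    using T5_limit_if_countable_punctured_nbhd by blast
next
  assume "\<forall>\<delta>>0. uncountable (({a - \<delta> <..< a + \<delta>} - {a}) \<inter> A)"
  then show "\<forall>f :: real \<Rightarrow> real. \<forall>L1 L2. T5_limit A f a L1 \<and> T5_limit A f a L2 \<longrightarrow> L1 = L2"
    using countable_punctured_nbhd_if_distinct_T5_limits by metis
qed

end
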